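(* Let $(\mathbb{F}_t)_{t\in\mathbb{N}}$ be a filtration on $\mathcal{E}$ with ranges $\mathcal{F}_t$, let $(X^{(i)}_t)_{t\in\mathbb{N}}$, $i=1,\dots,n$, be martingales with respect to $(\mathbb{F}_t)$, and let $g:\mathbb{R}^n\to\mathbb{R}$ be a continuous convex function. Write $\mathbf{X}_t=(X^{(1)}_t,\dots,X^{(n)}_t)$. If $g(\mathbf{X}_t)\in\mathcal{E}$ for all $t$, then $(g(\mathbf{X}_t))_{t\in\mathbb{N}}$ is a sub-martingale with respect to $(\mathbb{F}_t)$.
   Context: Let $\mathcal{E}$ be an order complete vector lattice with a weak order unit $E$, $K$ its Stone space, and $C^\infty(K)$ the vector lattice of continuous functions $K\to[-\infty,\infty]$ finite off a nowhere dense set (identified when equal off a nowhere dense set), the universal completion of $\mathcal{E}$. Fix a Maeda–Ogasawara representation of $\mathcal{E}$ as an order dense ideal of $C^\infty(K)$ with $E$ corresponding to $\mathbf{1}$. For continuous $g:\mathbb{R}^n\to\mathbb{R}$ and $X_1,\dots,X_n\in C^\infty(K)$, $g(X_1,\dots,X_n)$ denotes the unique element of $C^\infty(K)$ agreeing with $\omega\mapsto g(X_1(\omega),\dots,X_n(\omega))$ on the open dense set where all $X_i$ are finite. A conditional expectation on $\mathcal{E}$ is an order continuous, strictly positive linear projection $\mathbb{F}:\mathcal{E}\to\mathcal{E}$ whose range is an order complete vector sublattice of $\mathcal{E}$ and with $\mathbb{F}E=E$. A filtration is a family $(\mathbb{F}_t)$ of conditional expectations with $\mathbb{F}_s=\mathbb{F}_s\mathbb{F}_t=\mathbb{F}_t\mathbb{F}_s$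 for $s\le t$; $\mathcal{F}_t$ is the range of $\mathbb{F}_t$. A process $(X_t)$ in $\mathcal{E}$ is adapted if $X_t\in\mathcal{F}_t$ for all $t$; an adapted process is a sub-martingale if $\mathbb{F}_t(X_s)\ge X_t$ for all $t\le s$, a super-martingale if $\mathbb{F}_t(X_s)\le X_t$ for all $t\le s$, and a martingale if both hold. *)

theory Defs
  imports "HOL-Analysis.Analysis"
begin

text \<open>The Stone space K is modelled by a type 'k. Elements of the universal
completion C^infinity(K) are represented by continuous functions 'k => ereal
that are finite off a nowhere dense set. Since two continuous ereal-valued
functions that agree off a nowhere dense set agree everywhere (the set where
they differ is open), the identification modulo nowhere dense sets is trivial
and every class has exactly one representative.\<close>

definition Cinf :: "('k::topological_space \<Rightarrow> ereal) set" where
  "Cinf = {f. continuous_on UNIV f \<and> interior (closure {w. \<bar>f w\<bar> = \<infinity>}) = {}}"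

definition stonean_space :: "'k::t2_space itself \<Rightarrow> bool" where
  "stonean_space _ \<longleftrightarrow> compact (UNIV :: 'k set) \<and>
     (\<forall>U::'k set. open U \<longrightarrow> open (closure U))"

text \<open>Vector operations of C^infinity(K): the unique element agreeing with the
pointwise operation on the dense open set where all arguments are finite.\<close>
definition cadd :: "('k::topological_space \<Rightarrow> ereal) \<Rightarrow> ('k \<Rightarrow> ereal) \<Rightarrow> 'k \<Rightarrow> ereal" where
  "cadd X Y = (THE Z. Z \<in> Cinf \<and>
     (\<forall>w. \<bar>X w\<bar> \<noteq> \<infinity> \<and> \<bar>Y w\<bar> \<noteq> \<infinity> \<longrightarrow> Z w = X w + Y w))"

definition cscale :: "real \<Rightarrow> ('k::topological_space \<Rightarrow> ereal) \<Rightarrow> 'k \<Rightarrow> ereal" where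
  "cscale c X = (THE Z. Z \<in> Cinf \<and>
     (\<forall>w. \<bar>X w\<bar> \<noteq> \<infinity> \<longrightarrow> Z w = ereal c * X w))"

definition fcalc :: "(real^'n \<Rightarrow> real) \<Rightarrow> ('n \<Rightarrow> 'k::topological_space \<Rightarrow> ereal) \<Rightarrow> 'k \<Rightarrow> ereal" where
  "fcalc g Xs = (THE Y. Y \<in> Cinf \<and>
     (\<forall>w. (\<forall>i. \<bar>Xs i w\<bar> \<noteq> \<infinity>) \<longrightarrow> Y w = ereal (g (\<chi> i. real_of_ereal (Xs i w)))))"

text \<open>E is an order dense ideal of C^infinity(K) containing the constant 1
(Maeda--Ogasawara representation with E corresponding to 1).\<close>
definition MO_space :: "('k::t2_space \<Rightarrow> ereal) set \<Rightarrow> bool" where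
  "MO_space E \<longleftrightarrow> stonean_space TYPE('k) \<and> E \<subseteq> Cinf \<and>
     (\<lambda>_. 0) \<in> E \<and> (\<lambda>_. 1) \<in> E \<and>
     (\<forall>X\<in>E. \<forall>Y\<in>E. cadd X Y \<in> E) \<and>
     (\<forall>c. \<forall>X\<in>E. cscale c X \<in> E) \<and>
     (\<forall>X\<in>E. \<forall>Y\<in>Cinf. (\<forall>w. \<bar>Y w\<bar> \<le> \<bar>X w\<bar>) \<longrightarrow> Y \<in> E) \<and>
     (\<forall>Y\<in>Cinf. (\<lambda>_. 0) \<le> Y \<and> Y \<noteq> (\<lambda>_. 0) \<longrightarrow>
        (\<exists>X\<in>E. (\<lambda>_. 0) \<le> X \<and> X \<noteq> (\<lambda>_. 0) \<and> X \<le> Y))"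

definition is_inf_in :: "('a::order) set \<Rightarrow> 'a set \<Rightarrow> 'a \<Rightarrow> bool" where
  "is_inf_in S D x \<longleftrightarrow> x \<in> S \<and> (\<forall>d\<in>D. x \<le> d) \<and> (\<forall>y\<in>S. (\<forall>d\<in>D. y \<le> d) \<longrightarrow> y \<le> x)"

definition is_sup_in :: "('a::order) set \<Rightarrow> 'a set \<Rightarrow> 'a \<Rightarrow> bool" where
  "is_sup_in S D x \<longleftrightarrow> x \<in> S \<and> (\<forall>d\<in>D. d \<le> x) \<and> (\<forall>y\<in>S. (\<forall>d\<in>D. d \<le> y) \<longrightarrow> x \<le> y)"

definition order_continuous_on :: "('k::t2_space \<Rightarrow> ereal) set \<Rightarrow> (('k \<Rightarrow> ereal) \<Rightarrow> ('k \<Rightarrow> ereal)) \<Rightarrow> bool" where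
  "order_continuous_on E F \<longleftrightarrow>
     (\<forall>D. D \<subseteq> E \<and> D \<noteq> {} \<and> (\<forall>a\<in>D. \<forall>b\<in>D. \<exists>c\<in>D. c \<le> a \<and> c \<le> b) \<and>
          is_inf_in E D (\<lambda>_. 0) \<longrightarrow> is_inf_in E (F ` D) (\<lambda>_. 0))"

definition order_complete_sublattice :: "('k::t2_space \<Rightarrow> ereal) set \<Rightarrow> ('k \<Rightarrow> ereal) set \<Rightarrow> bool" where
  "order_complete_sublattice E R \<longleftrightarrow> R \<subseteq> E \<and> (\<lambda>_. 0) \<in> R \<and>
     (\<forall>X\<in>R. \<forall>Y\<in>R. cadd X Y \<in> R) \<and> (\<forall>c. \<forall>X\<in>R. cscale c X \<in> R) \<and>
     (\<forall>X\<in>R. \<forall>Y\<in>R. sup X Y \<in> R \<and> inf X Y \<in> R) \<and>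
     (\<forall>D. D \<subseteq> R \<and> D \<noteq> {} \<and> (\<exists>b\<in>R. \<forall>d\<in>D. d \<le> b) \<longrightarrow> (\<exists>s. is_sup_in R D s))"

definition cond_exp :: "('k::t2_space \<Rightarrow> ereal) set \<Rightarrow> (('k \<Rightarrow> ereal) \<Rightarrow> ('k \<Rightarrow> ereal)) \<Rightarrow> bool" where
  "cond_exp E F \<longleftrightarrow>
     (\<forall>X\<in>E. F X \<in> E) \<and>
     (\<forall>X\<in>E. \<forall>Y\<in>E. F (cadd X Y) = cadd (F X) (F Y)) \<and>
     (\<forall>c. \<forall>X\<in>E. F (cscale c X) = cscale c (F X)) \<and>
     (\<forall>X\<in>E. (\<lambda>_. 0) \<le> X \<and> X \<noteq> (\<lambda>_. 0) \<longrightarrow> (\<lambda>_. 0) \<le> F X \<and> F X \<noteq> (\<lambda>_. 0)) \<and>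
     (\<forall>X\<in>E. (\<lambda>_. 0) \<le> X \<longrightarrow> (\<lambda>_. 0) \<le> F X) \<and>
     (\<forall>X\<in>E. F (F X) = F X) \<and>
     order_continuous_on E F \<and>
     order_complete_sublattice E (F ` E) \<and>
     F (\<lambda>_. 1) = (\<lambda>_. 1)"

definition filtration :: "('k::t2_space \<Rightarrow> ereal) set \<Rightarrow> (nat \<Rightarrow> ('k \<Rightarrow> ereal) \<Rightarrow> ('k \<Rightarrow> ereal)) \<Rightarrow> bool" where
  "filtration E FF \<longleftrightarrow> (\<forall>t. cond_exp E (FF t)) \<and>
     (\<forall>s t. s \<le> t \<longrightarrow> (\<forall>X\<in>E. FF s X = FF s (FF t X) \<and> FF s X = FF t (FF s X)))"

definition adapted :: "('k::t2_space \<Rightarrow> ereal) set \<Rightarrow> (nat \<Rightarrow> ('k \<Rightarrow> ereal) \<Rightarrow> ('k \<Rightarrow> ereal)) \<Rightarrow> (nat \<Rightarrow> 'k \<Rightarrow> ereal) \<Rightarrow> bool" where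
  "adapted E FF X \<longleftrightarrow> (\<forall>t. X t \<in> E \<and> X t \<in> FF t ` E)"

definition submartingale where
  "submartingale E FF X \<longleftrightarrow> adapted E FF X \<and> (\<forall>t s. t \<le> s \<longrightarrow> X t \<le> FF t (X s))"

definition supermartingale where
  "supermartingale E FF X \<longleftrightarrow> adapted E FF X \<and> (\<forall>t s. t \<le> s \<longrightarrow> FF t (X s) \<le> X t)"

definition martingale where
  "martingale E FF X \<longleftrightarrow> submartingale E FF X \<and> supermartingale E FF X"

end

theory Submission
  imports Defs
begin

text \<open>A continuous convex g is the supremum of its affine minorants l. By linearity of the
conditional expectations l(X_t) is a martingale, so by positivity
l(X_t) = F_t l(X_s) \<le> F_t g(X_s); the supremum over l gives g(X_t) \<le> F_t g(X_s) wherever X_t is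
finite, hence everywhere, as that set is dense and both sides are continuous. For s = t the
difference F_t g(X_t) - g(X_t) is positive with conditional expectation 0, so strict positivity
forces g(X_t) = F_t g(X_t), which is adaptedness. That the operations of C^\<infinity>(K) are
determined by their values on dense open sets rests on extremal disconnectedness: there every
continuous real function on a dense open set has a continuous extended-real extension.\<close>

definition finite_locus :: "('k \<Rightarrow> ereal) set \<Rightarrow> 'k set" where
  "finite_locus Cs = {w. \<forall>C\<in>Cs. \<bar>C w\<bar> \<noteq> \<infinity>}"

lemma Cinf_finite_open_dense:
  assumes "C \<in> Cinf"
  shows "open {w. \<bar>C w\<bar> \<noteq> \<infinity>} \<and> closure {w. \<bar>C w\<bar> \<noteq> \<infinity>} = UNIV"
proof -
  have "{w. \<bar>C w\<bar> = \<infinity>} = C -` {\<infinity>, -\<infinity>}" by auto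
  then have closed: "closed {w. \<bar>C w\<bar> = \<infinity>}"
    using assms continuous_on_closed_vimage[of UNIV C] by (auto simp: Cinf_def)
  then have "interior {w. \<bar>C w\<bar> = \<infinity>} = {}"
    using assms by (simp add: Cinf_def)
  moreover have "{w. \<bar>C w\<bar> \<noteq> \<infinity>} = - {w. \<bar>C w\<bar> = \<infinity>}" by auto
  ultimately show ?thesis
    using closed by (simp add: closure_interior open_Compl del: closure_closed)
qed

lemma finite_locus_open_dense:
  assumes "finite Cs" "Cs \<subseteq> Cinf"
  shows "open (finite_locus Cs) \<and> closure (finite_locus Cs) = UNIV"
  using assms
proof (induction Cs rule: finite_induct)
  case empty
  then show ?case by (simp add: finite_locus_def)
next
  case (insert C Cs)
  have "finite_locus (insert C Cs) = {w. \<bar>C w\<bar> \<noteq> \<infinity>} \<inter> finite_locus Cs"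
    by (auto simp: finite_locus_def)
  then show ?case
    using insert Cinf_finite_open_dense[of C]
      closure_open_Int_superset[of "{w. \<bar>C w\<bar> \<noteq> \<infinity>}" "finite_locus Cs"]
    by auto
qed

lemma Cinf_eqI:
  assumes "finite Cs" "Cs \<subseteq> Cinf" "A \<in> Cinf" "B \<in> Cinf"
    and "\<And>w. w \<in> finite_locus Cs \<Longrightarrow> A w = B w"
  shows "A = B"
proof -
  have "closed {w. A w = B w}"
    using assms(3,4) by (intro closed_Collect_eq) (auto simp: Cinf_def)
  then have "closure (finite_locus Cs) \<subseteq> {w. A w = B w}"
    using assms(5) by (intro closure_minimal) auto
  then show ?thesis
    using finite_locus_open_dense[OF assms(1,2)] by auto
qed

lemma Cinf_leI:
  assumes "finite Cs" "Cs \<subseteq> Cinf" "A \<in> Cinf" "B \<in> Cinf"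
    and "\<And>w. w \<in> finite_locus Cs \<Longrightarrow> A w \<le> B w"
  shows "A \<le> B"
proof -
  have "closed {w. A w \<le> B w}"
    using assms(3,4) by (intro closed_Collect_le) (auto simp: Cinf_def)
  then have "closure (finite_locus Cs) \<subseteq> {w. A w \<le> B w}"
    using assms(5) by (intro closure_minimal) auto
  then show ?thesis
    using finite_locus_open_dense[OF assms(1,2)] by (auto simp: le_fun_def)
qed

lemma const_in_Cinf: "\<bar>c\<bar> \<noteq> \<infinity> \<Longrightarrow> (\<lambda>_. c) \<in> Cinf"
  by (simp add: Cinf_def)

lemma continuous_on_finite_locus:
  assumes "C \<in> Cs" "C \<in> Cinf"
  shows "continuous_on (finite_locus Cs) (\<lambda>w. real_of_ereal (C w))"
proof (rule continuous_on_compose2[of "{x::ereal. \<bar>x\<bar> \<noteq> \<infinity>}" real_of_ereal _ C])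
  show "continuous_on {x::ereal. \<bar>x\<bar> \<noteq> \<infinity>} real_of_ereal"
    by (rule continuous_at_imp_continuous_on) (auto intro: continuous_at_of_ereal)
  show "continuous_on (finite_locus Cs) C"
    using assms(2) by (auto simp: Cinf_def intro: continuous_on_subset)
  show "C ` finite_locus Cs \<subseteq> {x. \<bar>x\<bar> \<noteq> \<infinity>}"
    using assms(1) by (auto simp: finite_locus_def)
qed

subsection \<open>Continuous extension in extremally disconnected spaces\<close>

lemma continuous_on_Inf_clopen_levels:
  fixes B :: "real \<Rightarrow> 'k::topological_space set"
  assumes open_B: "\<And>q. open (B q)" and closed_B: "\<And>q. closed (B q)"
    and mono_B: "\<And>q q'. q \<le> q' \<Longrightarrow> B q \<subseteq> B q'"
  shows "continuous_on UNIV (\<lambda>w. Inf (ereal ` {q. w \<in> B q}))"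
proof -
  define H where "H w = Inf (ereal ` {q. w \<in> B q})" for w
  have less_H_iff: "a < H w \<longleftrightarrow> (\<exists>q. a < ereal q \<and> w \<notin> B q)" for w a
  proof
    assume "a < H w"
    then obtain q where q: "a < ereal q" "ereal q < H w"
      using ereal_dense2 by blast
    have "w \<notin> B q"
    proof
      assume "w \<in> B q"
      then have "H w \<le> ereal q" unfolding H_def by (auto intro: Inf_lower)
      with q show False by simp
    qed
    with q show "\<exists>q. a < ereal q \<and> w \<notin> B q" by blast
  next
    assume "\<exists>q. a < ereal q \<and> w \<notin> B q"
    then obtain q where q: "a < ereal q" "w \<notin> B q" by blast
    have "ereal q \<le> H w" unfolding H_def
    proof (rule Inf_greatest)
      fix x assume "x \<in> ereal ` {q. w \<in> B q}"
      then obtain q' where "x = ereal q'" "w \<in> B q'" by auto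
      with q(2) mono_B[of q' q] show "ereal q \<le> x" by (cases "q' \<le> q") auto
    qed
    with q show "a < H w" by simp
  qed
  have "H -` {..<a} = (\<Union>q\<in>{q. ereal q < a}. B q)" for a
    by (auto simp: H_def Inf_less_iff)
  moreover have "H -` {a<..} = (\<Union>q\<in>{q. a < ereal q}. - B q)" for a
    using less_H_iff by auto
  ultimately have "open (H -` {..<a})" "open (H -` {a<..})" for a
    using open_B closed_B by (auto simp: open_Compl)
  then have "continuous_on UNIV H"
    by (intro continuous_on_generate_topology[OF open_generated_order]) auto
  then show ?thesis by (simp add: H_def)
qed

lemma stonean_continuous_extension:
  fixes h :: "'k::t2_space \<Rightarrow> real"
  assumes stonean: "stonean_space TYPE('k)" and "open U" and cont_h: "continuous_on U h"
  shows "\<exists>Z. continuous_on UNIV Z \<and> (\<forall>w\<in>U. Z w = ereal (h w))"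
proof -
  define B where "B q = closure {w\<in>U. h w < q}" for q
  have "open {w\<in>U. h w < q}" for q
  proof -
    have "{w\<in>U. h w < q} = h -` {..<q} \<inter> U" by auto
    then show ?thesis using \<open>open U\<close> cont_h by (simp add: continuous_on_open_vimage)
  qed
  then have "open (B q)" for q
    using stonean unfolding stonean_space_def B_def by blast
  moreover have "B q \<subseteq> B q'" if "q \<le> q'" for q q'
    unfolding B_def using that by (intro closure_mono) auto
  ultimately have cont: "continuous_on UNIV (\<lambda>w. Inf (ereal ` {q. w \<in> B q}))"
    by (intro continuous_on_Inf_clopen_levels) (auto simp: B_def)
  have "Inf (ereal ` {q. w \<in> B q}) = ereal (h w)" if "w \<in> U" for w
  proof (rule antisym)
    show "Inf (ereal ` {q. w \<in> B q}) \<le> ereal (h w)"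
    proof (rule ereal_le_epsilon2)
      fix e :: real
      assume "0 < e"
      with that have "w \<in> B (h w + e)"
        unfolding B_def using closure_subset by fastforce
      then have "Inf (ereal ` {q. w \<in> B q}) \<le> ereal (h w + e)" by (auto intro: Inf_lower)
      then show "Inf (ereal ` {q. w \<in> B q}) \<le> ereal (h w) + ereal e" by simp
    qed
  next
    show "ereal (h w) \<le> Inf (ereal ` {q. w \<in> B q})"
    proof (rule Inf_greatest)
      fix x assume "x \<in> ereal ` {q. w \<in> B q}"
      then obtain q where q: "x = ereal q" "w \<in> B q" by auto
      have "h w \<le> q"
      proof (rule ccontr)
        assume "\<not> h w \<le> q"
        define N where "N = h -` {q<..} \<inter> U"
        have "open N"
          using \<open>open U\<close> cont_h by (simp add: continuous_on_open_vimage N_def)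
        moreover have "N \<inter> {w\<in>U. h w < q} = {}" by (auto simp: N_def)
        ultimately have "N \<inter> B q = {}"
          unfolding B_def using open_Int_closure_eq_empty by blast
        moreover have "w \<in> N" using \<open>\<not> h w \<le> q\<close> that by (auto simp: N_def)
        ultimately show False using q(2) by blast
      qed
      with q(1) show "ereal (h w) \<le> x" by simp
    qed
  qed
  with cont show ?thesis by blast
qed

lemma Cinf_ex1_extension:
  fixes h :: "'k::t2_space \<Rightarrow> real"
  assumes "stonean_space TYPE('k)" "finite Cs" "Cs \<subseteq> Cinf"
    and "continuous_on (finite_locus Cs) h"
  shows "\<exists>!Z. Z \<in> Cinf \<and> (\<forall>w\<in>finite_locus Cs. Z w = ereal (h w))"
proof -
  define U where "U = finite_locus Cs"
  have U: "open U" "closure U = UNIV"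
    using finite_locus_open_dense[OF assms(2,3)] by (auto simp: U_def)
  obtain Z where Z: "continuous_on UNIV Z" "\<forall>w\<in>U. Z w = ereal (h w)"
    using stonean_continuous_extension[OF assms(1) U(1)] assms(4) by (auto simp: U_def)
  have "closure {w. \<bar>Z w\<bar> = \<infinity>} \<subseteq> - U"
    using Z(2) U(1) by (intro closure_minimal) (auto simp: open_closed[symmetric])
  then have "interior (closure {w. \<bar>Z w\<bar> = \<infinity>}) \<subseteq> interior (- U)"
    by (rule interior_mono)
  also have "interior (- U) = {}"
    using U(2) by (simp add: interior_closure)
  finally have "Z \<in> Cinf"
    using Z(1) by (auto simp: Cinf_def)
  moreover have "Z' = Z" if "Z' \<in> Cinf" "\<forall>w\<in>U. Z' w = ereal (h w)" for Z'
    using that \<open>Z \<in> Cinf\<close> Z(2) assms(2,3) by (intro Cinf_eqI[of Cs]) (auto simp: U_def)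
  ultimately show ?thesis
    using Z(2) unfolding U_def by blast
qed

lemma theI_Cinf_extension:
  fixes h :: "'k::t2_space \<Rightarrow> real"
  assumes "stonean_space TYPE('k)" "finite Cs" "Cs \<subseteq> Cinf"
    and "continuous_on (finite_locus Cs) h"
    and "\<And>Z. P Z \<longleftrightarrow> Z \<in> Cinf \<and> (\<forall>w\<in>finite_locus Cs. Z w = ereal (h w))"
  shows "P (THE Z. P Z)"
proof -
  have "\<exists>!Z. P Z"
    using Cinf_ex1_extension[OF assms(1-4)] by (simp only: assms(5))
  then show ?thesis by (rule theI')
qed

lemma
  fixes X Y :: "'k::t2_space \<Rightarrow> ereal"
  assumes "stonean_space TYPE('k)" "X \<in> Cinf" "Y \<in> Cinf"
  shows cadd_in_Cinf: "cadd X Y \<in> Cinf"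
    and cadd_apply: "\<bar>X w\<bar> \<noteq> \<infinity> \<Longrightarrow> \<bar>Y w\<bar> \<noteq> \<infinity> \<Longrightarrow> cadd X Y w = X w + Y w"
proof -
  have cont: "continuous_on (finite_locus {X, Y}) (\<lambda>w. real_of_ereal (X w) + real_of_ereal (Y w))"
    using assms by (intro continuous_on_add continuous_on_finite_locus) auto
  have "cadd X Y \<in> Cinf \<and> (\<forall>w. \<bar>X w\<bar> \<noteq> \<infinity> \<and> \<bar>Y w\<bar> \<noteq> \<infinity> \<longrightarrow> cadd X Y w = X w + Y w)"
    unfolding cadd_def
    by (rule theI_Cinf_extension[OF assms(1) _ _ cont])
       (use assms in \<open>auto simp: finite_locus_def ereal_real'\<close>)
  then show "cadd X Y \<in> Cinf" "\<bar>X w\<bar> \<noteq> \<infinity> \<Longrightarrow> \<bar>Y w\<bar> \<noteq> \<infinity> \<Longrightarrow> cadd X Y w = X w + Y w"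
    by auto
qed

lemma
  fixes X :: "'k::t2_space \<Rightarrow> ereal"
  assumes "stonean_space TYPE('k)" "X \<in> Cinf"
  shows cscale_in_Cinf: "cscale c X \<in> Cinf"
    and cscale_apply: "\<bar>X w\<bar> \<noteq> \<infinity> \<Longrightarrow> cscale c X w = ereal c * X w"
proof -
  have cont: "continuous_on (finite_locus {X}) (\<lambda>w. c * real_of_ereal (X w))"
    using assms by (intro continuous_on_mult continuous_on_const continuous_on_finite_locus) auto
  have "cscale c X \<in> Cinf \<and> (\<forall>w. \<bar>X w\<bar> \<noteq> \<infinity> \<longrightarrow> cscale c X w = ereal c * X w)"
    unfolding cscale_def
    by (rule theI_Cinf_extension[OF assms(1) _ _ cont])
       (use assms in \<open>auto simp: finite_locus_def ereal_real'\<close>)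
  then show "cscale c X \<in> Cinf" "\<bar>X w\<bar> \<noteq> \<infinity> \<Longrightarrow> cscale c X w = ereal c * X w"
    by auto
qed

lemma
  fixes Xs :: "'n::finite \<Rightarrow> 'k::t2_space \<Rightarrow> ereal" and g :: "real^'n \<Rightarrow> real"
  assumes "stonean_space TYPE('k)" "\<And>i. Xs i \<in> Cinf" "continuous_on UNIV g"
  shows fcalc_in_Cinf: "fcalc g Xs \<in> Cinf"
    and fcalc_apply: "w \<in> finite_locus (range Xs) \<Longrightarrow>
      fcalc g Xs w = ereal (g (\<chi> i. real_of_ereal (Xs i w)))"
proof -
  have "continuous_on (finite_locus (range Xs)) (\<lambda>w. \<chi> i. real_of_ereal (Xs i w))"
    using assms(2) by (intro continuous_on_vec_lambda continuous_on_finite_locus) auto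
  then have cont: "continuous_on (finite_locus (range Xs)) (\<lambda>w. g (\<chi> i. real_of_ereal (Xs i w)))"
    using continuous_on_compose2[OF assms(3)] by blast
  have "fcalc g Xs \<in> Cinf \<and> (\<forall>w. (\<forall>i. \<bar>Xs i w\<bar> \<noteq> \<infinity>) \<longrightarrow>
      fcalc g Xs w = ereal (g (\<chi> i. real_of_ereal (Xs i w))))"
    unfolding fcalc_def
    by (rule theI_Cinf_extension[OF assms(1) _ _ cont])
       (use assms(2) in \<open>auto simp: finite_locus_def\<close>)
  then show "fcalc g Xs \<in> Cinf" "w \<in> finite_locus (range Xs) \<Longrightarrow>
      fcalc g Xs w = ereal (g (\<chi> i. real_of_ereal (Xs i w)))"
    by (auto simp: finite_locus_def)
qed

definition csub :: "('k::topological_space \<Rightarrow> ereal) \<Rightarrow> ('k \<Rightarrow> ereal) \<Rightarrow> 'k \<Rightarrow> ereal" where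
  "csub X Y = cadd X (cscale (-1) Y)"

lemma
  fixes X Y :: "'k::t2_space \<Rightarrow> ereal"
  assumes "stonean_space TYPE('k)" "X \<in> Cinf" "Y \<in> Cinf"
  shows csub_in_Cinf: "csub X Y \<in> Cinf"
    and csub_apply: "\<bar>X w\<bar> \<noteq> \<infinity> \<Longrightarrow> \<bar>Y w\<bar> \<noteq> \<infinity> \<Longrightarrow> csub X Y w = X w - Y w"
proof -
  show "csub X Y \<in> Cinf"
    unfolding csub_def using assms by (intro cadd_in_Cinf cscale_in_Cinf)
  assume "\<bar>X w\<bar> \<noteq> \<infinity>" "\<bar>Y w\<bar> \<noteq> \<infinity>"
  moreover from this have "cscale (-1) Y w = - Y w"
    using assms by (cases "Y w") (simp_all add: cscale_apply)
  ultimately show "csub X Y w = X w - Y w"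
    unfolding csub_def using assms
    by (simp add: cadd_apply cscale_in_Cinf minus_ereal_def)
qed

lemma csub_nonneg_iff:
  fixes X Y :: "'k::t2_space \<Rightarrow> ereal"
  assumes "stonean_space TYPE('k)" "X \<in> Cinf" "Y \<in> Cinf"
  shows "(\<lambda>_. 0) \<le> csub X Y \<longleftrightarrow> Y \<le> X"
proof -
  have pointwise: "0 \<le> csub X Y w \<longleftrightarrow> Y w \<le> X w" if "w \<in> finite_locus {X, Y}" for w
    using that assms by (cases "X w"; cases "Y w") (auto simp: finite_locus_def csub_apply)
  have in_Cinf: "(\<lambda>_. 0) \<in> Cinf" "csub X Y \<in> Cinf" "{X, Y} \<subseteq> Cinf"
    using assms by (auto intro: const_in_Cinf csub_in_Cinf)
  show ?thesis
  proof
    assume "(\<lambda>_. 0) \<le> csub X Y"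
    then show "Y \<le> X"
      using pointwise in_Cinf by (intro Cinf_leI[of "{X, Y}"]) (auto simp: le_fun_def)
  next
    assume "Y \<le> X"
    then show "(\<lambda>_. 0) \<le> csub X Y"
      using pointwise in_Cinf by (intro Cinf_leI[of "{X, Y}"]) (auto simp: le_fun_def)
  qed
qed

lemma csub_eq_0_iff:
  fixes X Y :: "'k::t2_space \<Rightarrow> ereal"
  assumes "stonean_space TYPE('k)" "X \<in> Cinf" "Y \<in> Cinf"
  shows "csub X Y = (\<lambda>_. 0) \<longleftrightarrow> X = Y"
proof -
  have "csub X Y w = 0 \<longleftrightarrow> X w = Y w" if "w \<in> finite_locus {X, Y}" for w
    using that assms by (cases "X w"; cases "Y w") (auto simp: finite_locus_def csub_apply)
  moreover have "(\<lambda>_. 0) \<in> Cinf" "csub X Y \<in> Cinf" "{X, Y} \<subseteq> Cinf"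
    using assms by (auto intro: const_in_Cinf csub_in_Cinf)
  ultimately show ?thesis
    by (auto intro!: Cinf_eqI[of "{X, Y}"])
qed

lemma fcalc_eqI:
  fixes Xs :: "'n::finite \<Rightarrow> 'k::t2_space \<Rightarrow> ereal" and g :: "real^'n \<Rightarrow> real"
  assumes "stonean_space TYPE('k)" "\<And>i. Xs i \<in> Cinf" "continuous_on UNIV g"
    and "Z \<in> Cinf" "finite Cs" "Cs \<subseteq> Cinf"
    and "\<And>w. w \<in> finite_locus (range Xs \<union> Cs) \<Longrightarrow>
      Z w = ereal (g (\<chi> i. real_of_ereal (Xs i w)))"
  shows "fcalc g Xs = Z"
proof (rule Cinf_eqI[of "range Xs \<union> Cs"])
  fix w
  assume "w \<in> finite_locus (range Xs \<union> Cs)"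
  moreover from this have "w \<in> finite_locus (range Xs)" by (simp add: finite_locus_def)
  ultimately show "fcalc g Xs w = Z w"
    using assms by (simp add: fcalc_apply)
qed (use assms in \<open>auto intro: fcalc_in_Cinf\<close>)

lemma fcalc_const:
  fixes Xs :: "'n::finite \<Rightarrow> 'k::t2_space \<Rightarrow> ereal"
  assumes "stonean_space TYPE('k)" "\<And>i. Xs i \<in> Cinf"
  shows "fcalc (\<lambda>_. c) Xs = (\<lambda>_. ereal c)"
  using assms by (intro fcalc_eqI[where Cs = "{}"]) (auto intro: const_in_Cinf)

lemma fcalc_add:
  fixes Xs :: "'n::finite \<Rightarrow> 'k::t2_space \<Rightarrow> ereal" and g h :: "real^'n \<Rightarrow> real"
  assumes "stonean_space TYPE('k)" "\<And>i. Xs i \<in> Cinf"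
    and "continuous_on UNIV g" "continuous_on UNIV h"
  shows "fcalc (\<lambda>y. g y + h y) Xs = cadd (fcalc g Xs) (fcalc h Xs)"
proof (rule fcalc_eqI[where Cs = "{fcalc g Xs, fcalc h Xs}"])
  fix w
  assume "w \<in> finite_locus (range Xs \<union> {fcalc g Xs, fcalc h Xs})"
  then have "w \<in> finite_locus (range Xs)" by (simp add: finite_locus_def)
  then show "cadd (fcalc g Xs) (fcalc h Xs) w = ereal (g (\<chi> i. real_of_ereal (Xs i w))
      + h (\<chi> i. real_of_ereal (Xs i w)))"
    using assms by (simp add: fcalc_apply cadd_apply fcalc_in_Cinf)
qed (use assms in \<open>auto intro: continuous_intros cadd_in_Cinf fcalc_in_Cinf\<close>)

lemma fcalc_scaled_component:
  fixes Xs :: "'n::finite \<Rightarrow> 'k::t2_space \<Rightarrow> ereal"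
  assumes "stonean_space TYPE('k)" "\<And>i. Xs i \<in> Cinf"
  shows "fcalc (\<lambda>y. c * y $ i) Xs = cscale c (Xs i)"
proof (rule fcalc_eqI[where Cs = "{}"])
  fix w
  assume "w \<in> finite_locus (range Xs \<union> {})"
  then have "\<bar>Xs i w\<bar> \<noteq> \<infinity>" by (simp add: finite_locus_def)
  then show "cscale c (Xs i) w = ereal (c * (\<chi> i. real_of_ereal (Xs i w)) $ i)"
    using assms by (cases "Xs i w") (simp_all add: cscale_apply)
qed (use assms in \<open>auto intro!: continuous_intros cscale_in_Cinf\<close>)

lemma fcalc_mono:
  fixes Xs :: "'n::finite \<Rightarrow> 'k::t2_space \<Rightarrow> ereal" and g h :: "real^'n \<Rightarrow> real"
  assumes "stonean_space TYPE('k)" "\<And>i. Xs i \<in> Cinf"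
    and "continuous_on UNIV g" "continuous_on UNIV h" "\<And>y. g y \<le> h y"
  shows "fcalc g Xs \<le> fcalc h Xs"
  using assms by (intro Cinf_leI[of "range Xs"]) (auto simp: fcalc_apply fcalc_in_Cinf)

subsection \<open>Conditional expectations and martingales\<close>

lemma MO_space_stonean: "MO_space (E :: ('k::t2_space \<Rightarrow> ereal) set) \<Longrightarrow> stonean_space TYPE('k)"
  by (simp add: MO_space_def)

lemma MO_space_subset_Cinf: "MO_space E \<Longrightarrow> E \<subseteq> Cinf"
  by (simp add: MO_space_def)

lemma csub_in_MO_space: "MO_space E \<Longrightarrow> X \<in> E \<Longrightarrow> Y \<in> E \<Longrightarrow> csub X Y \<in> E"
  by (simp add: MO_space_def csub_def)

lemma cond_exp_csub:
  assumes "MO_space E" "cond_exp E F" "X \<in> E" "Y \<in> E"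
  shows "F (csub X Y) = csub (F X) (F Y)"
proof -
  have "cscale (-1) Y \<in> E" using assms(1,4) by (simp add: MO_space_def)
  then show ?thesis using assms(2-4) by (simp add: cond_exp_def csub_def)
qed

lemma cond_exp_mono:
  fixes E :: "('k::t2_space \<Rightarrow> ereal) set"
  assumes E: "MO_space E" and F: "cond_exp E F" and "X \<in> E" "Y \<in> E" "X \<le> Y"
  shows "F X \<le> F Y"
proof -
  note stonean = MO_space_stonean[OF E] and sub = MO_space_subset_Cinf[OF E]
  have "F X \<in> E" "F Y \<in> E" using F assms(3,4) by (auto simp: cond_exp_def)
  have "(\<lambda>_. 0) \<le> csub Y X"
    using assms(3-5) sub by (subst csub_nonneg_iff[OF stonean]) auto
  then have "(\<lambda>_. 0) \<le> F (csub Y X)"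
    using F E assms(3,4) by (simp add: cond_exp_def csub_in_MO_space)
  then have "(\<lambda>_. 0) \<le> csub (F Y) (F X)"
    using cond_exp_csub[OF E F assms(4,3)] by simp
  then show ?thesis
    using \<open>F X \<in> E\<close> \<open>F Y \<in> E\<close> sub by (subst (asm) csub_nonneg_iff[OF stonean]) auto
qed

text \<open>The only place where strict positivity of a conditional expectation is used.\<close>

lemma cond_exp_eq_if_le:
  fixes E :: "('k::t2_space \<Rightarrow> ereal) set"
  assumes E: "MO_space E" and F: "cond_exp E F" and "X \<in> E" "X \<le> F X"
  shows "F X = X"
proof -
  note stonean = MO_space_stonean[OF E] and sub = MO_space_subset_Cinf[OF E]
  have "F X \<in> E" "F (F X) = F X" using F assms(3) by (auto simp: cond_exp_def)
  then have "F X \<in> Cinf" using sub by auto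
  have D: "csub (F X) X \<in> E"
    using E \<open>F X \<in> E\<close> assms(3) by (rule csub_in_MO_space)
  have "(\<lambda>_. 0) \<le> csub (F X) X"
    using assms(3,4) \<open>F X \<in> E\<close> sub by (subst csub_nonneg_iff[OF stonean]) auto
  moreover have "F (csub (F X) X) = (\<lambda>_. 0)"
    using cond_exp_csub[OF E F \<open>F X \<in> E\<close> assms(3)] \<open>F (F X) = F X\<close> \<open>F X \<in> Cinf\<close>
    by (simp add: csub_eq_0_iff[OF stonean])
  ultimately have "csub (F X) X = (\<lambda>_. 0)"
    using F D unfolding cond_exp_def by blast
  then show ?thesis
    using \<open>F X \<in> E\<close> assms(3) sub by (subst (asm) csub_eq_0_iff[OF stonean]) auto
qed

lemma filtration_cond_exp: "filtration E FF \<Longrightarrow> cond_exp E (FF t)"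
  by (simp add: filtration_def)

lemma martingale_iff:
  assumes "filtration E FF"
  shows "martingale E FF Z \<longleftrightarrow> (\<forall>t. Z t \<in> E) \<and> (\<forall>t s. t \<le> s \<longrightarrow> FF t (Z s) = Z t)"
proof
  assume "martingale E FF Z"
  then show "(\<forall>t. Z t \<in> E) \<and> (\<forall>t s. t \<le> s \<longrightarrow> FF t (Z s) = Z t)"
    by (auto simp: martingale_def submartingale_def supermartingale_def adapted_def
        intro: antisym)
next
  assume Z: "(\<forall>t. Z t \<in> E) \<and> (\<forall>t s. t \<le> s \<longrightarrow> FF t (Z s) = Z t)"
  then have "Z t \<in> FF t ` E" for t by (metis image_eqI order_refl)
  with Z show "martingale E FF Z"
    by (simp add: martingale_def submartingale_def supermartingale_def adapted_def)
qed

lemma martingale_cadd: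
  assumes "MO_space E" "filtration E FF" "martingale E FF Z" "martingale E FF Z'"
  shows "martingale E FF (\<lambda>t. cadd (Z t) (Z' t))"
  using assms filtration_cond_exp[OF assms(2)]
  by (auto simp: martingale_iff[OF assms(2)] MO_space_def cond_exp_def)

lemma martingale_cscale:
  assumes "MO_space E" "filtration E FF" "martingale E FF Z"
  shows "martingale E FF (\<lambda>t. cscale c (Z t))"
  using assms filtration_cond_exp[OF assms(2)]
  by (auto simp: martingale_iff[OF assms(2)] MO_space_def cond_exp_def)

lemma cscale_one:
  assumes "stonean_space TYPE('k::t2_space)"
  shows "cscale c (\<lambda>_::'k. 1) = (\<lambda>_. ereal c)"
  using assms by (intro Cinf_eqI[of "{}"]) (auto simp: cscale_apply const_in_Cinf cscale_in_Cinf)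

lemma martingale_const:
  fixes E :: "('k::t2_space \<Rightarrow> ereal) set"
  assumes "MO_space E" "filtration E FF"
  shows "martingale E FF (\<lambda>_ _. ereal c)"
proof -
  have "cscale c (\<lambda>_. 1) \<in> E" "FF t (cscale c (\<lambda>_. 1)) = cscale c (\<lambda>_. 1)" for t
    using assms filtration_cond_exp[OF assms(2), of t] by (auto simp: MO_space_def cond_exp_def)
  then show ?thesis
    using cscale_one[OF MO_space_stonean[OF assms(1)]] by (simp add: martingale_iff[OF assms(2)])
qed

lemma martingale_fcalc_affine:
  fixes E :: "('k::t2_space \<Rightarrow> ereal) set" and X :: "'n::finite \<Rightarrow> nat \<Rightarrow> 'k \<Rightarrow> ereal"
  assumes E: "MO_space E" and FF: "filtration E FF" and X: "\<And>i. martingale E FF (X i)"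
  shows "martingale E FF (\<lambda>t. fcalc (\<lambda>y. b + inner a y) (\<lambda>i. X i t))"
proof -
  note stonean = MO_space_stonean[OF E]
  have X_Cinf: "X i t \<in> Cinf" for i t
    using X MO_space_subset_Cinf[OF E] by (auto simp: martingale_iff[OF FF])
  have "martingale E FF (\<lambda>t. fcalc (\<lambda>y. b + (\<Sum>i\<in>S. a $ i * y $ i)) (\<lambda>i. X i t))"
    if "finite S" for S
    using that
  proof (induction S rule: finite_induct)
    case empty
    then show ?case
      using martingale_const[OF E FF] by (simp add: fcalc_const[OF stonean X_Cinf])
  next
    case (insert j S)
    have "(\<lambda>y. b + (\<Sum>i\<in>insert j S. a $ i * y $ i))
        = (\<lambda>y. (b + (\<Sum>i\<in>S. a $ i * y $ i)) + a $ j * y $ j)"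
      using insert.hyps by (simp add: algebra_simps)
    then have "fcalc (\<lambda>y. b + (\<Sum>i\<in>insert j S. a $ i * y $ i)) (\<lambda>i. X i t)
        = cadd (fcalc (\<lambda>y. b + (\<Sum>i\<in>S. a $ i * y $ i)) (\<lambda>i. X i t)) (cscale (a $ j) (X j t))"
      for t
      by (simp add: fcalc_add[OF stonean X_Cinf] fcalc_scaled_component[OF stonean X_Cinf]
          continuous_intros)
    then show ?case
      using martingale_cadd[OF E FF insert.IH martingale_cscale[OF E FF X]] by simp
  qed
  from this[of UNIV] show ?thesis
    by (simp add: inner_vec_def)
qed

lemma convex_on_affine_minorant:
  fixes g :: "real^'n \<Rightarrow> real"
  assumes "continuous_on UNIV g" "convex_on UNIV g" "e > 0"
  shows "\<exists>a b. (\<forall>y. b + inner a y \<le> g y) \<and> g x - e \<le> b + inner a x"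
proof -
  define S where "S = {p. g (fst p) \<le> snd p}"
  have "convex S"
    using convex_epigraph[of UNIV g] assms(2) by (simp add: S_def epigraph_def)
  moreover have "closed S"
    unfolding S_def using assms(1)
    by (intro closed_Collect_le continuous_on_compose2[OF assms(1)] continuous_intros) auto
  moreover have "(x, g x - e) \<notin> S" using assms(3) by (simp add: S_def)
  ultimately obtain c d where sep: "inner c (x, g x - e) < d" "\<forall>p\<in>S. inner c p > d"
    using separating_hyperplane_closed_point by blast
  obtain a' c0 where c: "c = (a', c0)" by (cases c)
  have above: "inner a' y + c0 * g y > d" for y
    using sep(2) unfolding c S_def by auto
  have below: "inner a' x + c0 * (g x - e) < d"
    using sep(1) unfolding c by simp
  have "c0 * e > 0"
    using above[of x] below by (simp add: algebra_simps)
  then have "c0 > 0"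
    using assms(3) by (simp add: zero_less_mult_iff)
  define a where "a = (- (1 / c0)) *\<^sub>R a'"
  define b where "b = d / c0"
  have affine: "b + inner a y = (d - inner a' y) / c0" for y
    unfolding a_def b_def by (simp add: diff_divide_distrib)
  have "b + inner a y \<le> g y" for y
    using above[of y] \<open>c0 > 0\<close> by (simp add: affine divide_le_eq mult.commute)
  moreover have "g x - e \<le> b + inner a x"
    using below \<open>c0 > 0\<close> by (simp add: affine le_divide_eq mult.commute)
  ultimately show ?thesis by blast
qed

subsection \<open>Convex functions of martingales\<close>

lemma fcalc_convex_le_cond_exp:
  fixes E :: "('k::t2_space \<Rightarrow> ereal) set"
    and X :: "'n::finite \<Rightarrow> nat \<Rightarrow> 'k \<Rightarrow> ereal" and g :: "real^'n \<Rightarrow> real"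
  assumes E: "MO_space E" and FF: "filtration E FF" and X: "\<And>i. martingale E FF (X i)"
    and g: "continuous_on UNIV g" "convex_on UNIV g"
    and gX: "\<And>t. fcalc g (\<lambda>i. X i t) \<in> E"
    and "t \<le> s"
  shows "fcalc g (\<lambda>i. X i t) \<le> FF t (fcalc g (\<lambda>i. X i s))"
proof -
  note stonean = MO_space_stonean[OF E] and sub = MO_space_subset_Cinf[OF E]
  note F = filtration_cond_exp[OF FF, of t]
  have X_Cinf: "X i r \<in> Cinf" for i r
    using X sub by (auto simp: martingale_iff[OF FF])
  have "FF t (fcalc g (\<lambda>i. X i s)) \<in> E"
    using F gX by (simp add: cond_exp_def)
  have "ereal (g (\<chi> i. real_of_ereal (X i t w))) \<le> FF t (fcalc g (\<lambda>i. X i s)) w"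
    if w: "w \<in> finite_locus (range (\<lambda>i. X i t))" for w
  proof (rule ereal_le_epsilon2)
    fix e :: real
    assume "0 < e"
    define x where "x = (\<chi> i. real_of_ereal (X i t w))"
    obtain a b where minorant: "\<And>y. b + inner a y \<le> g y" and close: "g x - e \<le> b + inner a x"
      using convex_on_affine_minorant[OF g \<open>0 < e\<close>] by blast
    define L where "L r = fcalc (\<lambda>y. b + inner a y) (\<lambda>i. X i r)" for r
    have L: "L r \<in> E" "FF t (L s) = L t" for r
      using martingale_fcalc_affine[OF E FF X, of b a] \<open>t \<le> s\<close>
      by (auto simp: martingale_iff[OF FF] L_def)
    have "L s \<le> fcalc g (\<lambda>i. X i s)"
      unfolding L_def using g(1) minorant
      by (intro fcalc_mono[OF stonean X_Cinf]) (auto intro!: continuous_intros)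
    then have "FF t (L s) \<le> FF t (fcalc g (\<lambda>i. X i s))"
      by (rule cond_exp_mono[OF E F L(1) gX])
    then have "L t \<le> FF t (fcalc g (\<lambda>i. X i s))"
      by (simp only: L(2))
    moreover have "L t w = ereal (b + inner a x)"
      unfolding L_def x_def using w
      by (intro fcalc_apply[OF stonean X_Cinf]) (auto intro!: continuous_intros)
    ultimately have "ereal (b + inner a x) \<le> FF t (fcalc g (\<lambda>i. X i s)) w"
      by (metis le_fun_def)
    moreover have "ereal (g x) \<le> ereal (b + inner a x) + ereal e"
      using close by simp
    ultimately show "ereal (g x) \<le> FF t (fcalc g (\<lambda>i. X i s)) w + ereal e"
      unfolding x_def by (meson add_right_mono order_trans)
  qed
  then show ?thesis
    using \<open>FF t (fcalc g (\<lambda>i. X i s)) \<in> E\<close> sub g(1) X_Cinf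
    by (intro Cinf_leI[of "range (\<lambda>i. X i t)"])
       (auto simp: fcalc_apply[OF stonean] fcalc_in_Cinf[OF stonean])
qed

theorem mainTheorem10:
  fixes E :: "('k::t2_space \<Rightarrow> ereal) set"
    and FF :: "nat \<Rightarrow> ('k \<Rightarrow> ereal) \<Rightarrow> ('k \<Rightarrow> ereal)"
    and X :: "'n::finite \<Rightarrow> nat \<Rightarrow> 'k \<Rightarrow> ereal"
    and g :: "real^'n \<Rightarrow> real"
  assumes "MO_space E"
    and "filtration E FF"
    and "\<And>i. martingale E FF (X i)"
    and "continuous_on UNIV g"
    and "convex_on UNIV g"
    and "\<And>t. fcalc g (\<lambda>i. X i t) \<in> E"
  shows "submartingale E FF (\<lambda>t. fcalc g (\<lambda>i. X i t))"
proof -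
  define Y where "Y t = fcalc g (\<lambda>i. X i t)" for t
  have Y: "Y t \<in> E" for t
    using assms(6) by (simp add: Y_def)
  have le: "Y t \<le> FF t (Y s)" if "t \<le> s" for t s
    unfolding Y_def using fcalc_convex_le_cond_exp[OF assms that] .
  have "FF t (Y t) = Y t" for t
    using cond_exp_eq_if_le[OF assms(1) filtration_cond_exp[OF assms(2)] Y le] by simp
  then have "Y t \<in> FF t ` E" for t
    using Y by (metis image_eqI)
  with Y le show ?thesis
    unfolding submartingale_def adapted_def Y_def by blast
qed

end
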